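(* Let $(S,d)$ be a metric space, let $P$ be a non-empty subset of $S$ with the induced metric, and let $f,g\in\mathrm{BL}(P)$. Then: (i) $\mathcal{E}^{S,0}_P(f)\le\|f\|_\infty\mathbf{1}$; (ii) $\mathcal{E}^{S,0}_P(c\mathbf{1})=c\mathbf{1}$ for every $c\in\mathbb{R}$; (iii) if $f\le g$ and $|f|_L\ge|g|_L$, then $\mathcal{E}^{S,0}_P(f)\le\mathcal{E}^{S,0}_P(g)$; (iv) if $|f\vee g|_L\ge|f|_L$ and $|f\vee g|_L\ge|g|_L$, then $\mathcal{E}^{S,0}_P(f\vee g)\le\mathcal{E}^{S,0}_P(f)\vee\mathcal{E}^{S,0}_P(g)$.
   Context: $\mathrm{BL}(P)$ is the space of bounded real-valued Lipschitz functions on $P$, $|f|_L=\sup_{x\neq y}|f(x)-f(y)|/d(x,y)$ (with $|f|_L=0$ if $P$ is a singleton), $f\vee g$ is the pointwise maximum, and $\mathbf{1}$ is the constant function $1$. For $f\in\mathrm{BL}(P)$, $\mathcal{E}^{S,0}_P f(x)=\sup_{p\in P}[f(p)-|f|_L d(p,x)]$ for $x\in S$. *)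

theory Defs
  imports "HOL-Analysis.Analysis"
begin

text \<open>Functions on P are represented as total functions; only values on P matter.
  The ambient metric space S is the type 'a (class metric_space).\<close>

definition BL :: "'a::metric_space set \<Rightarrow> ('a \<Rightarrow> real) set" where
  "BL P = {f. (\<exists>B. \<forall>x\<in>P. \<bar>f x\<bar> \<le> B) \<and> (\<exists>K. \<forall>x\<in>P. \<forall>y\<in>P. \<bar>f x - f y\<bar> \<le> K * dist x y)}"

definition lip_seminorm :: "'a::metric_space set \<Rightarrow> ('a \<Rightarrow> real) \<Rightarrow> real" where
  "lip_seminorm P f =
     (if \<exists>x\<in>P. \<exists>y\<in>P. x \<noteq> y
      then (SUP xy \<in> {(x,y). x \<in> P \<and> y \<in> P \<and> x \<noteq> y}. \<bar>f (fst xy) - f (snd xy)\<bar> / dist (fst xy) (snd xy))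
      else 0)"

definition sup_norm :: "'a set \<Rightarrow> ('a \<Rightarrow> real) \<Rightarrow> real" where
  "sup_norm P f = (SUP x\<in>P. \<bar>f x\<bar>)"

definition ext0 :: "'a::metric_space set \<Rightarrow> ('a \<Rightarrow> real) \<Rightarrow> 'a \<Rightarrow> real" where
  "ext0 P f x = (SUP p\<in>P. f p - lip_seminorm P f * dist p x)"

end

theory Submission
  imports Defs
begin

text \<open>\<open>ext0 P f x\<close> is the supremum of the downward cones \<open>f p - |f|\<^sub>L d(p, x)\<close>, \<open>p \<in> P\<close>,
  all of the same slope \<open>|f|\<^sub>L \<ge> 0\<close>. Each cone lies below \<open>|f p| \<le> \<parallel>f\<parallel>\<^sub>\<infinity>\<close>, constants have
  slope \<open>0\<close>, and (iii), (iv) follow by comparing cones termwise: raising the apex or flattening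
  the slope only raises a cone.\<close>

lemma lip_seminorm_nonneg:
  assumes "f \<in> BL P"
  shows "0 \<le> lip_seminorm P f"
proof (cases "\<exists>x\<in>P. \<exists>y\<in>P. x \<noteq> y")
  case True
  then obtain x y where xy: "x \<in> P" "y \<in> P" "x \<noteq> y" by blast
  from assms obtain K where K: "\<forall>x\<in>P. \<forall>y\<in>P. \<bar>f x - f y\<bar> \<le> K * dist x y"
    unfolding BL_def by blast
  let ?S = "{(x,y). x \<in> P \<and> y \<in> P \<and> x \<noteq> y}"
  let ?r = "\<lambda>xy. \<bar>f (fst xy) - f (snd xy)\<bar> / dist (fst xy) (snd xy)"
  have bdd: "bdd_above (?r ` ?S)"
  proof (rule bdd_aboveI2)
    fix xy assume "xy \<in> ?S"
    then obtain a b where ab: "xy = (a,b)" "a \<in> P" "b \<in> P" "a \<noteq> b" by auto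
    have "\<bar>f a - f b\<bar> \<le> K * dist a b" using K ab by blast
    then show "?r xy \<le> K" using ab by (simp add: divide_le_eq)
  qed
  have "0 \<le> ?r (x,y)" by simp
  also have "\<dots> \<le> (SUP xy \<in> ?S. ?r xy)"
    by (rule cSUP_upper[OF _ bdd]) (use xy in auto)
  finally show ?thesis using True unfolding lip_seminorm_def by simp
qed (simp add: lip_seminorm_def)

lemma lip_seminorm_const: "lip_seminorm P (\<lambda>_. c) = 0"
  unfolding lip_seminorm_def by (auto intro!: cSUP_const)

lemma bdd_above_ext0_cones:
  assumes "f \<in> BL P"
  shows "bdd_above ((\<lambda>p. f p - lip_seminorm P f * dist p x) ` P)"
proof -
  from assms obtain B where B: "\<forall>x\<in>P. \<bar>f x\<bar> \<le> B" unfolding BL_def by blast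
  have "f p - lip_seminorm P f * dist p x \<le> B" if "p \<in> P" for p
  proof -
    have "0 \<le> lip_seminorm P f * dist p x" using lip_seminorm_nonneg[OF assms] by simp
    then show ?thesis using B that by force
  qed
  then show ?thesis by (rule bdd_aboveI2)
qed

lemma ext0_ge_cone:
  assumes "f \<in> BL P" and "p \<in> P"
  shows "f p - lip_seminorm P f * dist p x \<le> ext0 P f x"
  unfolding ext0_def by (rule cSUP_upper[OF assms(2) bdd_above_ext0_cones[OF assms(1)]])

lemma ext0_le_sup_norm:
  assumes "P \<noteq> {}" and "f \<in> BL P"
  shows "ext0 P f x \<le> sup_norm P f"
  unfolding ext0_def
proof (rule cSUP_least[OF assms(1)])
  fix p assume p: "p \<in> P"
  from assms(2) obtain B where "\<forall>x\<in>P. \<bar>f x\<bar> \<le> B" unfolding BL_def by blast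
  then have bdd: "bdd_above ((\<lambda>x. \<bar>f x\<bar>) ` P)" by (auto intro: bdd_aboveI2)
  have "f p - lip_seminorm P f * dist p x \<le> \<bar>f p\<bar>"
    using lip_seminorm_nonneg[OF assms(2)] by (simp add: add_increasing2 diff_le_eq)
  also have "\<dots> \<le> sup_norm P f" unfolding sup_norm_def by (rule cSUP_upper[OF p bdd])
  finally show "f p - lip_seminorm P f * dist p x \<le> sup_norm P f" .
qed

lemma ext0_const:
  assumes "P \<noteq> {}"
  shows "ext0 P (\<lambda>_. c) x = c"
  unfolding ext0_def lip_seminorm_const using assms by simp

lemma ext0_mono:
  assumes "P \<noteq> {}" and "g \<in> BL P"
    and "\<forall>p\<in>P. f p \<le> g p" and "lip_seminorm P g \<le> lip_seminorm P f"
  shows "ext0 P f x \<le> ext0 P g x"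
  unfolding ext0_def
proof (rule cSUP_least[OF assms(1)])
  fix p assume p: "p \<in> P"
  have "lip_seminorm P g * dist p x \<le> lip_seminorm P f * dist p x"
    using assms(4) by (simp add: mult_right_mono)
  then have "f p - lip_seminorm P f * dist p x \<le> g p - lip_seminorm P g * dist p x"
    using assms(3) p by auto
  also have "\<dots> \<le> ext0 P g x" by (rule ext0_ge_cone[OF assms(2) p])
  finally show "f p - lip_seminorm P f * dist p x \<le> (SUP p\<in>P. g p - lip_seminorm P g * dist p x)"
    unfolding ext0_def .
qed

lemma ext0_max_le:
  assumes "P \<noteq> {}" and "f \<in> BL P" and "g \<in> BL P"
    and "lip_seminorm P f \<le> lip_seminorm P (\<lambda>p. max (f p) (g p))"
    and "lip_seminorm P g \<le> lip_seminorm P (\<lambda>p. max (f p) (g p))"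
  shows "ext0 P (\<lambda>p. max (f p) (g p)) x \<le> max (ext0 P f x) (ext0 P g x)"
  unfolding ext0_def
proof (rule cSUP_least[OF assms(1)])
  let ?L = "lip_seminorm P (\<lambda>p. max (f p) (g p))"
  fix p assume p: "p \<in> P"
  have "lip_seminorm P f * dist p x \<le> ?L * dist p x"
    "lip_seminorm P g * dist p x \<le> ?L * dist p x"
    using assms(4,5) by (simp_all add: mult_right_mono)
  moreover have "f p - lip_seminorm P f * dist p x \<le> ext0 P f x"
    "g p - lip_seminorm P g * dist p x \<le> ext0 P g x"
    using ext0_ge_cone[OF assms(2) p] ext0_ge_cone[OF assms(3) p] .
  ultimately show "max (f p) (g p) - ?L * dist p x
      \<le> max (SUP p\<in>P. f p - lip_seminorm P f * dist p x) (SUP p\<in>P. g p - lip_seminorm P g * dist p x)"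
    unfolding ext0_def by linarith
qed

theorem proposition4p3:
  fixes P :: "'a::metric_space set" and f g :: "'a \<Rightarrow> real"
  assumes "P \<noteq> {}" and "f \<in> BL P" and "g \<in> BL P"
  shows "(\<forall>x. ext0 P f x \<le> sup_norm P f)
    \<and> (\<forall>c::real. \<forall>x. ext0 P (\<lambda>_. c) x = c)
    \<and> ((\<forall>p\<in>P. f p \<le> g p) \<and> lip_seminorm P f \<ge> lip_seminorm P g
           \<longrightarrow> (\<forall>x. ext0 P f x \<le> ext0 P g x))
    \<and> (lip_seminorm P (\<lambda>p. max (f p) (g p)) \<ge> lip_seminorm P f
         \<and> lip_seminorm P (\<lambda>p. max (f p) (g p)) \<ge> lip_seminorm P g
           \<longrightarrow> (\<forall>x. ext0 P (\<lambda>p. max (f p) (g p)) x \<le> max (ext0 P f x) (ext0 P g x)))"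
  using ext0_le_sup_norm[OF assms(1,2)] ext0_const[OF assms(1)]
    ext0_mono[OF assms(1,3)] ext0_max_le[OF assms]
  by blast

end
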